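(* For every positive integer $r$ and nonnegative integer $n$, as formal power series in $t$, \[ \frac{A^r_n(t,q)}{\prod_{i=0}^n(1-tq^{ri})}=\sum_{k=0}^n\frac{q^{r\binom{k+1}{2}+(1-r)k}\,[r]_q^k\,[k]_{q^r}!\,S_r[n,k]\,t^k}{\prod_{i=0}^k(1-tq^{ri})}. \]
   Context: $[k]_q=1+\dots+q^{k-1}$, $[0]_q=0$, $[k]_q!=\prod_{i=1}^k[i]_q$; the subscript $q^r$ means $q$ replaced by $q^r$. The $r$-colored $q$-Stirling numbers of the second kind are defined by $S_r[0,k]=\delta_{0k}$ and $S_r[n,k]=S_r[n-1,k-1]+[rk+1]_qS_r[n-1,k]$ for $n\ge1$. The colored permutation group $\mathbb{Z}_r\wr\mathfrak{S}_n$ consists of words $\pi=\pi_1^{z_1}\cdots\pi_n^{z_n}$ with $\pi_1\cdots\pi_n\in\mathfrak{S}_n$ and colors $z_i\in\{0,\dots,r-1\}$, where $k^0$ is written $k$; these letters are totally ordered by $n^{r-1}<\dots<n^1<\dots<1^{r-1}<\dots<1^1<0<1<\dots<n$. With $\pi_0^{z_0}=0$, $\mathrm{Des}_r(\pi)=\{i\in\{0,\dots,n-1\}:\pi_i^{z_i}>\pi_{i+1}^{z_{i+1}}\}$, $\mathrm{des}_r(\pi)=|\mathrm{Des}_r(\pi)|$, $\mathrm{fmaj}_r(\pi)=r\sum_{i\in\mathrm{Des}_r(\pi)}i+\sum_{i=1}^nz_i$, and $A^r_n(t,q)=\sum_{\pi\in\mathbb{Z}_r\wr\mathfrak{S}_n}t^{\mathrm{des}_r(\pi)}q^{\mathrm{fmaj}_r(\pi)}$.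 *)

theory Defs
  imports "HOL-Computational_Algebra.Formal_Power_Series"
begin

definition qint :: "'a::comm_ring_1 \<Rightarrow> nat \<Rightarrow> 'a" where
  "qint q k = (\<Sum>i<k. q ^ i)"

definition qfact :: "'a::comm_ring_1 \<Rightarrow> nat \<Rightarrow> 'a" where
  "qfact q k = (\<Prod>i=1..k. qint q i)"

text \<open>r-colored q-Stirling numbers of the second kind S_r[n,k]
  (S_r[n-1,-1] is read as 0).\<close>
fun qStirling :: "nat \<Rightarrow> 'a::comm_ring_1 \<Rightarrow> nat \<Rightarrow> nat \<Rightarrow> 'a" where
  "qStirling r q 0 k = (if k = 0 then 1 else 0)"
| "qStirling r q (Suc n) 0 = qint q (r * 0 + 1) * qStirling r q n 0"
| "qStirling r q (Suc n) (Suc k) =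
     qStirling r q n k + qint q (r * Suc k + 1) * qStirling r q n (Suc k)"

text \<open>A colored permutation in Z_r wr S_n is a word pi_1^{z_1} ... pi_n^{z_n},
  represented as the list of pairs (pi_i, z_i).\<close>
definition colored_perms :: "nat \<Rightarrow> nat \<Rightarrow> (nat \<times> nat) list set" where
  "colored_perms r n = {w. length w = n \<and> distinct (map fst w) \<and>
      set (map fst w) = {1..n} \<and> (\<forall>x\<in>set w. snd x < r)}"

text \<open>The total order on letters
  n^{r-1} < ... < n^1 < ... < 1^{r-1} < ... < 1^1 < 0 < 1 < ... < n,
  realised by an order-embedding into the integers; the letter 0 is (0,0).\<close>
definition letter_key :: "nat \<Rightarrow> nat \<times> nat \<Rightarrow> int" where
  "letter_key r x = (if snd x = 0 then int (fst x) else - (int r * int (fst x) + int (snd x)))"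

definition letter_less :: "nat \<Rightarrow> nat \<times> nat \<Rightarrow> nat \<times> nat \<Rightarrow> bool" where
  "letter_less r x y \<longleftrightarrow> letter_key r x < letter_key r y"

text \<open>Des_r(pi) with pi_0^{z_0} = 0: position i (0 \<le> i \<le> n-1) is a descent iff
  letter i > letter i+1, where the word is 0 # w.\<close>
definition col_Des :: "nat \<Rightarrow> (nat \<times> nat) list \<Rightarrow> nat set" where
  "col_Des r w = {i. i < length w \<and> letter_less r (((0,0) # w) ! (i+1)) (((0,0) # w) ! i)}"

definition col_des :: "nat \<Rightarrow> (nat \<times> nat) list \<Rightarrow> nat" where
  "col_des r w = card (col_Des r w)"

definition col_fmaj :: "nat \<Rightarrow> (nat \<times> nat) list \<Rightarrow> nat" where
  "col_fmaj r w = r * (\<Sum>i\<in>col_Des r w. i) + (\<Sum>x\<leftarrow>w. snd x)"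

definition colored_eulerian :: "nat \<Rightarrow> nat \<Rightarrow> 'a::field \<Rightarrow> 'a fps" where
  "colored_eulerian r n q =
     (\<Sum>w\<in>colored_perms r n. fps_X ^ col_des r w * fps_const (q ^ col_fmaj r w))"

end

theory Submission
  imports Defs
begin

text \<open>Both sides of the identity equal the series G_n = sum_m [r m + 1]_q^n t^m.
  On the right-hand side, [r m + 1]_q = 1 + q [r]_q [m]_Q with Q = q^r, and the recursion of the
  colored q-Stirling numbers expands G_n in the generating functions of the q-falling factorials
  [m]_Q [m - 1]_Q ... [m - k + 1]_Q, which are [k]_Q! t^k / prod_(i=0..k) (1 - t Q^i).
  On the left-hand side, inserting the letter n + 1 with each of its r colors into each of the
  n + 1 slots of a colored permutation changes its descent set in a controlled way: the new letter
  is the largest one when uncolored and the smallest one when colored. Summing over all insertions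
  gives A_(n+1) = t [r]_q [n+1]_Q A_n + (1 - t) (A_n + q [r]_q D A_n), where D multiplies the
  coefficient of t^m by [m]_Q. By a q-Leibniz rule for D, the product
  prod_(i=0..n) (1 - t Q^i) G_n satisfies the same recursion.\<close>

section \<open>q-integers and q-falling factorials\<close>

lemma qint_0 [simp]: "qint q 0 = 0"
  by (simp add: qint_def)

lemma qint_Suc: "qint q (Suc k) = qint q k + q ^ k"
  by (simp add: qint_def)

lemma qint_1 [simp]: "qint q (Suc 0) = 1"
  by (simp add: qint_def)

lemma qint_add: "qint q (a + b) = qint q a + q ^ a * qint q b"
  by (induction b) (simp_all add: qint_Suc algebra_simps power_add)

lemma qint_Suc2: "qint q (Suc k) = 1 + q * qint q k"
  using qint_add[of q 1 k] by simp

lemma qint_mult: "qint q (r * m) = qint q r * qint (q ^ r) m"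
proof (induction m)
  case (Suc m)
  have "qint q (r * Suc m) = qint q (r * m) + (q ^ r) ^ m * qint q r"
    by (metis mult_Suc_right add.commute qint_add power_mult)
  then show ?case
    using Suc by (simp add: qint_Suc algebra_simps)
qed simp

lemma one_minus_mult_qint: "(1 - q) * qint q n = 1 - q ^ n"
  by (simp add: qint_def one_diff_power_eq)

lemma qint_fps_const: "qint (fps_const q) k = fps_const (qint q k)"
  by (induction k) (simp_all add: qint_Suc)

definition qfalling :: "'a::comm_ring_1 \<Rightarrow> nat \<Rightarrow> nat \<Rightarrow> 'a" where
  "qfalling Q k m = (\<Prod>i<k. qint Q (m - i))"

lemma qfalling_0 [simp]: "qfalling Q 0 m = 1"
  by (simp add: qfalling_def)

lemma qfalling_eq_0: "m < k \<Longrightarrow> qfalling Q k m = 0"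
  unfolding qfalling_def by (rule prod_zero) (auto intro!: bexI[of _ m])

lemma qfalling_Suc: "qfalling Q (Suc k) m = qfalling Q k m * qint Q (m - k)"
  by (simp add: qfalling_def)

lemma qfalling_Suc_Suc: "qfalling Q (Suc k) (Suc m) = qint Q (Suc m) * qfalling Q k m"
  unfolding qfalling_def by (subst prod.lessThan_Suc_shift) simp

lemma qfalling_Suc_recurrence:
  "qfalling Q (Suc k) (Suc m) - Q ^ Suc k * qfalling Q (Suc k) m = qint Q (Suc k) * qfalling Q k m"
proof (cases "k \<le> m")
  case True
  then have "qint Q (Suc m) = qint Q (Suc k) + Q ^ Suc k * qint Q (m - k)"
    using qint_add[of Q "Suc k" "m - k"] by simp
  then show ?thesis
    unfolding qfalling_Suc_Suc qfalling_Suc[of Q k m] by (simp add: algebra_simps)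
qed (simp add: qfalling_eq_0)

text \<open>A q-analogue of \<open>x (x)\<^sub>k = (x)\<^sub>k\<^sub>+\<^sub>1 + k (x)\<^sub>k\<close> for falling factorials \<open>(x)\<^sub>k\<close>.\<close>
lemma qint_mult_qfalling:
  "qint q (r * m + 1) * qfalling (q ^ r) k m =
     q ^ (r * k + 1) * qint q r * qfalling (q ^ r) (Suc k) m
     + qint q (r * k + 1) * qfalling (q ^ r) k m"
proof (cases "k \<le> m")
  case True
  then have "r * m + 1 = (r * k + 1) + r * (m - k)"
    by (simp add: diff_mult_distrib2)
  then have "qint q (r * m + 1) = qint q (r * k + 1) + q ^ (r * k + 1) * qint q r * qint (q ^ r) (m - k)"
    by (simp only: qint_add qint_mult mult.assoc)
  then show ?thesis
    by (simp add: qfalling_Suc algebra_simps)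
qed (simp add: qfalling_eq_0)

lemma qStirling_eq_0: "n < k \<Longrightarrow> qStirling r q n k = 0"
proof (induction n arbitrary: k)
  case (Suc n)
  then show ?case by (cases k) auto
qed simp

lemma qint_power_qStirling:
  "qint q (r * m + 1) ^ n =
     (\<Sum>k\<le>n. q ^ (r * (k choose 2) + k) * qint q r ^ k * qfalling (q ^ r) k m * qStirling r q n k)"
proof (induction n)
  case 0
  then show ?case by (simp add: numeral_2_eq_2)
next
  case (Suc n)
  define w where "w k = q ^ (r * (k choose 2) + k) * qint q r ^ k" for k
  define c where "c k = w k * qfalling (q ^ r) k m" for k
  have w_Suc: "w (Suc k) = w k * (q ^ (r * k + 1) * qint q r)" for k
  proof -
    have "r * (Suc k choose 2) + Suc k = (r * (k choose 2) + k) + (r * k + 1)"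
      by (simp add: numeral_2_eq_2 algebra_simps)
    then show ?thesis
      by (simp add: w_def power_add algebra_simps)
  qed
  have step: "qint q (r * m + 1) * c k = c (Suc k) + qint q (r * k + 1) * c k" for k
  proof -
    have "qint q (r * m + 1) * c k = w k * (qint q (r * m + 1) * qfalling (q ^ r) k m)"
      by (simp add: c_def)
    then show ?thesis
      unfolding qint_mult_qfalling by (simp add: c_def w_Suc algebra_simps)
  qed
  have S_Suc: "qStirling r q (Suc n) k = (if k = 0 then 0 else qStirling r q n (k - 1))
      + qint q (r * k + 1) * qStirling r q n k" for k
    by (cases k) simp_all
  have "(\<Sum>k\<le>Suc n. c k * qStirling r q (Suc n) k) =
      (\<Sum>k\<le>Suc n. c k * (if k = 0 then 0 else qStirling r q n (k - 1)))
      + (\<Sum>k\<le>Suc n. qint q (r * k + 1) * c k * qStirling r q n k)"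
    by (simp add: S_Suc sum.distrib algebra_simps)
  also have "(\<Sum>k\<le>Suc n. c k * (if k = 0 then 0 else qStirling r q n (k - 1))) =
      (\<Sum>k\<le>n. c (Suc k) * qStirling r q n k)"
    by (subst sum.atMost_Suc_shift) simp
  also have "(\<Sum>k\<le>Suc n. qint q (r * k + 1) * c k * qStirling r q n k) =
      (\<Sum>k\<le>n. qint q (r * k + 1) * c k * qStirling r q n k)"
    by (simp add: qStirling_eq_0)
  also have "(\<Sum>k\<le>n. c (Suc k) * qStirling r q n k) + \<dots> =
      (\<Sum>k\<le>n. (c (Suc k) + qint q (r * k + 1) * c k) * qStirling r q n k)"
    by (simp add: sum.distrib algebra_simps)
  also have "\<dots> = qint q (r * m + 1) * (\<Sum>k\<le>n. c k * qStirling r q n k)"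
    unfolding step[symmetric] sum_distrib_left by (simp add: mult.assoc)
  finally show ?case
    unfolding c_def w_def Suc.IH[symmetric] by simp
qed

section \<open>The q-Pochhammer product and the q-Euler operator\<close>

definition fps_qpoch :: "'a::comm_ring_1 \<Rightarrow> nat \<Rightarrow> 'a fps" where
  "fps_qpoch Q k = (\<Prod>i<k. 1 - fps_const (Q ^ i) * fps_X)"

lemma fps_qpoch_0 [simp]: "fps_qpoch Q 0 = 1"
  by (simp add: fps_qpoch_def)

lemma fps_qpoch_Suc: "fps_qpoch Q (Suc k) = fps_qpoch Q k * (1 - fps_const (Q ^ k) * fps_X)"
  by (simp add: fps_qpoch_def)

lemma fps_qpoch_nth_0 [simp]: "fps_nth (fps_qpoch Q k) 0 = 1"
  by (induction k) (simp_all add: fps_qpoch_Suc)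

lemma prod_atLeast0AtMost_eq_fps_qpoch:
  "(\<Prod>i=0..k. 1 - fps_const (Q ^ i) * fps_X) = fps_qpoch Q (Suc k)"
  by (simp add: fps_qpoch_def atLeast0AtMost lessThan_Suc_atMost)

lemma Abs_fps_qfalling_Suc:
  "Abs_fps (qfalling Q (Suc k)) * (1 - fps_const (Q ^ Suc k) * fps_X) =
     fps_const (qint Q (Suc k)) * fps_X * Abs_fps (qfalling Q k)"
proof -
  have "F * (1 - fps_const c * fps_X) = F - fps_const c * (fps_X * F)" for F :: "'a fps" and c
    by (simp add: algebra_simps)
  then show ?thesis
    by (intro fps_ext) (auto simp: qfalling_eq_0 qfalling_Suc_recurrence mult.assoc gr0_conv_Suc simp del: power_Suc)
qed

lemma Abs_fps_qfalling_mult_fps_qpoch: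
  "Abs_fps (qfalling Q k) * fps_qpoch Q (Suc k) = fps_const (qfact Q k) * fps_X ^ k"
proof (induction k)
  case 0
  show ?case
    by (rule fps_ext) (simp add: fps_qpoch_Suc qfact_def algebra_simps)
next
  case (Suc k)
  have "Abs_fps (qfalling Q (Suc k)) * fps_qpoch Q (Suc (Suc k)) =
      (Abs_fps (qfalling Q (Suc k)) * (1 - fps_const (Q ^ Suc k) * fps_X)) * fps_qpoch Q (Suc k)"
    by (simp only: fps_qpoch_Suc[of Q "Suc k"] mult_ac)
  also have "\<dots> = fps_const (qint Q (Suc k)) * fps_X * (Abs_fps (qfalling Q k) * fps_qpoch Q (Suc k))"
    by (simp only: Abs_fps_qfalling_Suc mult.assoc)
  also have "\<dots> = fps_const (qint Q (Suc k)) * fps_X * fps_const (qfact Q k) * fps_X ^ k"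
    by (simp only: Suc.IH mult.assoc)
  finally show ?case
    by (simp add: qfact_def algebra_simps)
qed

definition fps_dilate :: "'a::comm_ring_1 \<Rightarrow> 'a fps \<Rightarrow> 'a fps" where
  "fps_dilate Q F = Abs_fps (\<lambda>m. Q ^ m * fps_nth F m)"

definition fps_qXD :: "'a::comm_ring_1 \<Rightarrow> 'a fps \<Rightarrow> 'a fps" where
  "fps_qXD Q F = Abs_fps (\<lambda>m. qint Q m * fps_nth F m)"

lemma fps_dilate_1 [simp]: "fps_dilate Q 1 = 1"
  by (rule fps_ext) (simp add: fps_dilate_def)

lemma fps_dilate_mult: "fps_dilate Q (F * G) = fps_dilate Q F * fps_dilate Q G"
proof (rule fps_ext)
  fix m
  have "fps_nth (fps_dilate Q (F * G)) m =
      (\<Sum>i=0..m. (Q ^ i * fps_nth F i) * (Q ^ (m - i) * fps_nth G (m - i)))"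
    unfolding fps_dilate_def fps_nth_Abs_fps fps_mult_nth sum_distrib_left
    by (rule sum.cong) (simp_all add: algebra_simps flip: power_add)
  also have "\<dots> = fps_nth (fps_dilate Q F * fps_dilate Q G) m"
    by (simp add: fps_dilate_def fps_mult_nth)
  finally show "fps_nth (fps_dilate Q (F * G)) m = fps_nth (fps_dilate Q F * fps_dilate Q G) m" .
qed

text \<open>The q-analogue of the Leibniz rule for \<open>fps_XD\<close>; the shift \<open>fps_dilate\<close> appears
  because \<open>[m]\<^sub>Q = [i]\<^sub>Q + Q\<^sup>i [m - i]\<^sub>Q\<close>.\<close>
lemma fps_qXD_mult: "fps_qXD Q (F * G) = fps_qXD Q F * G + fps_dilate Q F * fps_qXD Q G"
proof (rule fps_ext)
  fix m
  have "fps_nth (fps_qXD Q (F * G)) m = (\<Sum>i=0..m. (qint Q i * fps_nth F i) * fps_nth G (m - i)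
      + (Q ^ i * fps_nth F i) * (qint Q (m - i) * fps_nth G (m - i)))"
    unfolding fps_qXD_def fps_nth_Abs_fps fps_mult_nth sum_distrib_left
  proof (rule sum.cong)
    fix i
    assume "i \<in> {0..m}"
    then have "qint Q m = qint Q i + Q ^ i * qint Q (m - i)"
      by (metis atLeastAtMost_iff le_add_diff_inverse qint_add)
    then show "qint Q m * (fps_nth F i * fps_nth G (m - i)) = qint Q i * fps_nth F i * fps_nth G (m - i)
        + Q ^ i * fps_nth F i * (qint Q (m - i) * fps_nth G (m - i))"
      by (simp add: algebra_simps)
  qed simp
  also have "\<dots> = fps_nth (fps_qXD Q F * G + fps_dilate Q F * fps_qXD Q G) m"
    by (simp add: fps_qXD_def fps_dilate_def fps_mult_nth sum.distrib)
  finally show "fps_nth (fps_qXD Q (F * G)) m = fps_nth (fps_qXD Q F * G + fps_dilate Q F * fps_qXD Q G) m" .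
qed

lemma fps_dilate_linear: "fps_dilate Q (1 - fps_const a * fps_X) = 1 - fps_const (a * Q) * fps_X"
  by (rule fps_ext) (auto simp: fps_dilate_def le_Suc_eq)

lemma fps_qXD_linear: "fps_qXD Q (1 - fps_const a * fps_X) = - (fps_const a * fps_X)"
  by (rule fps_ext) (auto simp: fps_qXD_def le_Suc_eq)

lemma fps_qXD_sum: "fps_qXD Q (\<Sum>a\<in>A. F a) = (\<Sum>a\<in>A. fps_qXD Q (F a))"
  by (rule fps_ext) (simp add: fps_qXD_def fps_sum_nth sum_distrib_left)

lemma fps_qXD_monom: "fps_qXD Q (fps_X ^ d * fps_const c) = fps_X ^ d * fps_const (qint Q d * c)"
  by (rule fps_ext) (simp add: fps_qXD_def fps_X_power_mult_nth)

lemma fps_dilate_fps_qpoch_Suc: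
  "fps_dilate Q (fps_qpoch Q (Suc k)) = fps_dilate Q (fps_qpoch Q k) * (1 - fps_const (Q ^ Suc k) * fps_X)"
proof -
  have "Q ^ k * Q = Q ^ Suc k"
    by (simp add: mult.commute)
  then show ?thesis
    by (simp only: fps_qpoch_Suc fps_dilate_mult fps_dilate_linear)
qed

lemma fps_qpoch_Suc_eq_dilate: "fps_qpoch Q (Suc k) = (1 - fps_X) * fps_dilate Q (fps_qpoch Q k)"
proof (induction k)
  case (Suc k)
  have "(1 - fps_X) * fps_dilate Q (fps_qpoch Q (Suc k)) =
      ((1 - fps_X) * fps_dilate Q (fps_qpoch Q k)) * (1 - fps_const (Q ^ Suc k) * fps_X)"
    by (simp only: fps_dilate_fps_qpoch_Suc mult.assoc)
  then show ?case
    by (simp only: Suc.IH[symmetric] fps_qpoch_Suc[of Q "Suc k"])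
qed (simp add: fps_qpoch_Suc)

lemma fps_qXD_fps_qpoch:
  "fps_qXD Q (fps_qpoch Q (Suc k)) = - (fps_const (qint Q (Suc k)) * fps_X * fps_dilate Q (fps_qpoch Q k))"
proof (induction k)
  case 0
  then show ?case
    using fps_qXD_linear[of Q 1] by (simp add: fps_qpoch_Suc)
next
  case (Suc k)
  have ring: "- (c * fps_X * D) * (1 - a * fps_X) + D * (1 - a * fps_X) * - (a * fps_X) =
      - ((c + a) * fps_X * (D * (1 - a * fps_X)))" for a c D :: "'a fps"
    by (simp add: algebra_simps)
  have "fps_qXD Q (fps_qpoch Q (Suc (Suc k))) =
      fps_qXD Q (fps_qpoch Q (Suc k)) * (1 - fps_const (Q ^ Suc k) * fps_X)
      + fps_dilate Q (fps_qpoch Q (Suc k)) * fps_qXD Q (1 - fps_const (Q ^ Suc k) * fps_X)"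
    by (simp only: fps_qpoch_Suc[of Q "Suc k"] fps_qXD_mult)
  also have "\<dots> = - ((fps_const (qint Q (Suc k)) + fps_const (Q ^ Suc k)) * fps_X
        * (fps_dilate Q (fps_qpoch Q k) * (1 - fps_const (Q ^ Suc k) * fps_X)))"
    unfolding Suc fps_qXD_linear fps_dilate_fps_qpoch_Suc by (rule ring)
  also have "\<dots> = - (fps_const (qint Q (Suc (Suc k))) * fps_X * fps_dilate Q (fps_qpoch Q (Suc k)))"
    by (simp only: fps_dilate_fps_qpoch_Suc fps_const_add qint_Suc[of Q "Suc k"])
  finally show ?case .
qed

section \<open>The Carlitz series\<close>

definition carlitz_series :: "'a::comm_ring_1 \<Rightarrow> nat \<Rightarrow> nat \<Rightarrow> 'a fps" where
  "carlitz_series q r n = Abs_fps (\<lambda>m. qint q (r * m + 1) ^ n)"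

lemma fps_qpoch_1_mult_carlitz_series_0: "fps_qpoch Q 1 * carlitz_series q r 0 = 1"
  by (rule fps_ext) (simp add: fps_qpoch_Suc carlitz_series_def algebra_simps)

lemma carlitz_series_Suc:
  "carlitz_series q r (Suc n) = carlitz_series q r n + fps_const (q * qint q r) * fps_qXD (q ^ r) (carlitz_series q r n)"
proof (rule fps_ext)
  fix m
  have "qint q (r * m + 1) = 1 + q * qint q r * qint (q ^ r) m"
    by (simp add: qint_Suc2 qint_mult mult.assoc)
  then show "fps_nth (carlitz_series q r (Suc n)) m =
      fps_nth (carlitz_series q r n + fps_const (q * qint q r) * fps_qXD (q ^ r) (carlitz_series q r n)) m"
    by (simp add: carlitz_series_def fps_qXD_def algebra_simps)
qed

lemma carlitz_series_qStirling:
  "carlitz_series q r n =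
     (\<Sum>k\<le>n. fps_const (q ^ (r * (k choose 2) + k) * qint q r ^ k * qStirling r q n k)
        * Abs_fps (qfalling (q ^ r) k))"
  by (rule fps_ext)
    (simp only: carlitz_series_def fps_sum_nth fps_nth_Abs_fps fps_mult_left_const_nth qint_power_qStirling,
     simp add: mult_ac)

lemma fps_qpoch_colored_recurrence:
  "fps_X * fps_const (qint q r * qint (q ^ r) (Suc n)) * fps_qpoch (q ^ r) (Suc n)
     + (1 - fps_X) * (fps_qpoch (q ^ r) (Suc n)
       + fps_const (q * qint q r) * fps_qXD (q ^ r) (fps_qpoch (q ^ r) (Suc n)))
   = fps_qpoch (q ^ r) (Suc (Suc n))"
proof -
  define Q where "Q = q ^ r"
  define D where "D = fps_dilate Q (fps_qpoch Q n)"
  define c where "c = fps_const (qint q r)"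
  define N where "N = fps_const (qint Q (Suc n))"
  define a where "a = fps_const (Q ^ Suc n)"
  have c_scalar: "(1 - fps_const q) * c = 1 - fps_const Q"
    using one_minus_mult_qint[of q r] unfolding c_def Q_def
    by (metis fps_const_1_eq_1 fps_const_mult fps_const_sub)
  have N_scalar: "(1 - fps_const Q) * N = 1 - a"
    using one_minus_mult_qint[of Q "Suc n"] unfolding N_def a_def
    by (metis fps_const_1_eq_1 fps_const_mult fps_const_sub)
  have "fps_X * fps_const (qint q r * qint (q ^ r) (Suc n)) * fps_qpoch (q ^ r) (Suc n)
     + (1 - fps_X) * (fps_qpoch (q ^ r) (Suc n)
       + fps_const (q * qint q r) * fps_qXD (q ^ r) (fps_qpoch (q ^ r) (Suc n))) =
      fps_X * (c * N) * ((1 - fps_X) * D) + (1 - fps_X) * ((1 - fps_X) * D - fps_const q * c * (N * fps_X * D))"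
    unfolding fps_qXD_fps_qpoch unfolding fps_qpoch_Suc_eq_dilate[of _ n]
    by (simp add: Q_def D_def c_def N_def algebra_simps)
  also have "\<dots> = (1 - fps_X) * D * (1 - (1 - (1 - fps_const q) * c * N) * fps_X)"
    by (simp add: algebra_simps)
  also have "\<dots> = (1 - fps_X) * (D * (1 - a * fps_X))"
    by (simp only: c_scalar N_scalar mult.assoc) simp
  also have "\<dots> = fps_qpoch Q (Suc (Suc n))"
    by (simp only: fps_qpoch_Suc_eq_dilate[of Q "Suc n"] fps_dilate_fps_qpoch_Suc D_def a_def)
  finally show ?thesis
    by (simp only: Q_def)
qed

lemma eq_fps_qpoch_mult_carlitz_series:
  fixes A :: "nat \<Rightarrow> 'a::comm_ring_1 fps"
  assumes A_0: "A 0 = 1"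
    and A_Suc: "\<And>n. A (Suc n) = fps_X * fps_const (qint q r * qint (q ^ r) (Suc n)) * A n
        + (1 - fps_X) * (A n + fps_const (q * qint q r) * fps_qXD (q ^ r) (A n))"
  shows "A n = fps_qpoch (q ^ r) (Suc n) * carlitz_series q r n"
proof (induction n)
  case 0
  then show ?case
    using fps_qpoch_1_mult_carlitz_series_0 by (simp add: A_0)
next
  case (Suc n)
  define P where "P = fps_qpoch (q ^ r) (Suc n)"
  define G where "G = carlitz_series q r n"
  define c where "c = fps_const (q * qint q r)"
  have "A (Suc n) = (fps_X * fps_const (qint q r * qint (q ^ r) (Suc n)) * P
      + (1 - fps_X) * (P + c * fps_qXD (q ^ r) P)) * G
      + (1 - fps_X) * fps_dilate (q ^ r) P * (c * fps_qXD (q ^ r) G)"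
    unfolding A_Suc Suc.IH fps_qXD_mult P_def[symmetric] G_def[symmetric] c_def[symmetric]
    by (simp add: algebra_simps)
  also have "\<dots> = fps_qpoch (q ^ r) (Suc (Suc n)) * (G + c * fps_qXD (q ^ r) G)"
    unfolding P_def c_def fps_qpoch_colored_recurrence fps_qpoch_Suc_eq_dilate[of _ "Suc n"]
    by (simp add: algebra_simps)
  finally show ?case
    by (simp add: carlitz_series_Suc G_def c_def)
qed

section \<open>Inserting a letter into a word\<close>

definition insert_at :: "nat \<Rightarrow> 'a \<Rightarrow> 'a list \<Rightarrow> 'a list" where
  "insert_at j x xs = take j xs @ x # drop j xs"

lemma length_insert_at: "length (insert_at j x xs) = Suc (length xs)"
  by (simp add: insert_at_def)

lemma set_insert_at: "set (insert_at j x xs) = insert x (set xs)"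
  using set_append[of "take j xs" "drop j xs"] by (auto simp: insert_at_def)

lemma map_insert_at: "map f (insert_at j x xs) = insert_at j (f x) (map f xs)"
  by (simp add: insert_at_def take_map drop_map)

lemma distinct_insert_at: "distinct (insert_at j x xs) \<longleftrightarrow> x \<notin> set xs \<and> distinct xs"
proof -
  have "distinct (ys @ x # zs) \<longleftrightarrow> x \<notin> set (ys @ zs) \<and> distinct (ys @ zs)" for ys zs
    by auto
  then show ?thesis
    unfolding insert_at_def by (metis append_take_drop_id)
qed

lemma sum_list_insert_at: "sum_list (insert_at j x xs) = x + sum_list (xs :: 'a::comm_monoid_add list)"
  using sum_list_append[of "take j xs" "drop j xs"] by (simp add: insert_at_def algebra_simps)

lemma Cons_insert_at: "y # insert_at j x xs = insert_at (Suc j) x (y # xs)"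
  by (simp add: insert_at_def)

lemma nth_insert_at_less: "i < j \<Longrightarrow> j \<le> length xs \<Longrightarrow> insert_at j x xs ! i = xs ! i"
  by (simp add: insert_at_def nth_append)

lemma nth_insert_at_eq: "j \<le> length xs \<Longrightarrow> insert_at j x xs ! j = x"
  by (simp add: insert_at_def nth_append)

lemma nth_insert_at_Suc: "j \<le> i \<Longrightarrow> i < length xs \<Longrightarrow> insert_at j x xs ! Suc i = xs ! i"
  by (simp add: insert_at_def nth_append nth_Cons' Suc_diff_le)

lemma filter_insert_at: "\<not> P x \<Longrightarrow> filter P (insert_at j x xs) = filter P xs"
proof -
  assume "\<not> P x"
  then have "filter P (insert_at j x xs) = filter P (take j xs @ drop j xs)"
    unfolding insert_at_def filter_append by simp
  then show ?thesis
    by simp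
qed

lemma length_takeWhile_insert_at:
  "\<not> P x \<Longrightarrow> \<forall>y\<in>set xs. P y \<Longrightarrow> j \<le> length xs \<Longrightarrow> length (takeWhile P (insert_at j x xs)) = j"
proof -
  assume "\<not> P x" "\<forall>y\<in>set xs. P y" "j \<le> length xs"
  moreover have "\<forall>y\<in>set (take j xs). P y"
    using \<open>\<forall>y\<in>set xs. P y\<close> by (auto dest: in_set_takeD)
  ultimately show ?thesis
    by (simp add: insert_at_def)
qed

lemma insert_at_inject:
  assumes "\<not> P x" "\<not> P x'" "\<forall>y\<in>set xs. P y" "\<forall>y\<in>set xs'. P y"
    and "j \<le> length xs" "j' \<le> length xs'"
    and eq: "insert_at j x xs = insert_at j' x' xs'"
  shows "xs = xs' \<and> x = x' \<and> j = j'"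
proof -
  have "xs = xs'"
  proof -
    have "filter P xs = xs" "filter P xs' = xs'"
      using assms(3,4) by (simp_all add: filter_id_conv)
    then show ?thesis
      using filter_insert_at[of P x j xs] filter_insert_at[of P x' j' xs'] assms(1,2) eq by simp
  qed
  moreover have "j = j'"
    using length_takeWhile_insert_at[of P x xs j] length_takeWhile_insert_at[of P x' xs' j'] assms
    by metis
  moreover have "x = x'"
    using nth_insert_at_eq[of j xs x] nth_insert_at_eq[of j' xs' x'] assms(5,6) eq calculation by metis
  ultimately show ?thesis
    by blast
qed

definition descents :: "('a \<Rightarrow> 'a \<Rightarrow> bool) \<Rightarrow> 'a list \<Rightarrow> nat set" where
  "descents R xs = {i. Suc i < length xs \<and> R (xs ! Suc i) (xs ! i)}"

lemma mem_descents_insert_at: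
  assumes "j < length xs"
  shows "i \<in> descents R (insert_at (Suc j) x xs) \<longleftrightarrow>
    (i < j \<and> i \<in> descents R xs) \<or> (i = j \<and> R x (xs ! j))
    \<or> (i = Suc j \<and> Suc j < length xs \<and> R (xs ! Suc j) x) \<or> (Suc j < i \<and> i - 1 \<in> descents R xs)"
proof -
  let ?ys = "insert_at (Suc j) x xs"
  consider "i < j" | "i = j" | "i = Suc j" | "Suc j < i"
    by linarith
  then show ?thesis
  proof cases
    case 1
    then have "?ys ! i = xs ! i" "?ys ! Suc i = xs ! Suc i"
      using assms by (simp_all add: nth_insert_at_less)
    then show ?thesis
      using 1 assms by (simp add: descents_def length_insert_at)
  next
    case 2
    then have "?ys ! i = xs ! j" "?ys ! Suc i = x"
      using assms by (simp_all add: nth_insert_at_less nth_insert_at_eq)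
    then show ?thesis
      using 2 assms by (simp add: descents_def length_insert_at)
  next
    case 3
    then have "?ys ! i = x" "Suc j < length xs \<Longrightarrow> ?ys ! Suc i = xs ! Suc j"
      using assms by (simp_all add: nth_insert_at_eq nth_insert_at_Suc)
    then show ?thesis
      using 3 by (auto simp: descents_def length_insert_at)
  next
    case 4
    then have "i < length xs \<Longrightarrow> ?ys ! i = xs ! (i - 1)" "i < length xs \<Longrightarrow> ?ys ! Suc i = xs ! i"
      using nth_insert_at_Suc[of "Suc j" "i - 1" xs x] nth_insert_at_Suc[of "Suc j" i xs x] by simp_all
    then show ?thesis
      using 4 by (auto simp: descents_def length_insert_at)
  qed
qed

section \<open>Colored permutations and their descents\<close>

lemma colored_perms_0: "colored_perms r 0 = {[]}"
  by (auto simp: colored_perms_def)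

lemma insert_at_in_colored_perms:
  assumes "w \<in> colored_perms r n" "z < r"
  shows "insert_at j (Suc n, z) w \<in> colored_perms r (Suc n)"
proof -
  have "Suc n \<notin> set (map fst w)"
    using assms(1) by (auto simp: colored_perms_def)
  then show ?thesis
    using assms by (auto simp: colored_perms_def map_insert_at length_insert_at distinct_insert_at
        set_insert_at atLeastAtMostSuc_conv)
qed

lemma colored_perms_Suc_remove:
  assumes "v \<in> colored_perms r (Suc n)"
  obtains w z j where "w \<in> colored_perms r n" "z < r" "j \<le> n" "v = insert_at j (Suc n, z) w"
proof -
  have v: "length v = Suc n" "distinct (map fst v)" "set (map fst v) = {1..Suc n}"
      "\<forall>x\<in>set v. snd x < r"
    using assms by (simp_all add: colored_perms_def)
  then obtain x where x: "x \<in> set v" "fst x = Suc n"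
    by (metis atLeastAtMost_iff imageE le_refl list.set_map One_nat_def Suc_le_mono le0)
  then obtain ys zs where v_eq: "v = insert_at (length ys) x (ys @ zs)"
    by (metis split_list insert_at_def append_eq_conv_conj)
  let ?w = "ys @ zs"
  have map_v: "map fst v = insert_at (length ys) (Suc n) (map fst ?w)"
    by (simp add: v_eq map_insert_at x(2))
  have "Suc n \<notin> set (map fst ?w)" "distinct (map fst ?w)"
    using v(2) unfolding map_v distinct_insert_at by simp_all
  moreover have "set (map fst ?w) = {1..n}"
  proof -
    have "insert (Suc n) (set (map fst ?w)) = insert (Suc n) {1..n}"
      using v(3) unfolding map_v set_insert_at by (simp add: atLeastAtMostSuc_conv)
    then show ?thesis
      using \<open>Suc n \<notin> set (map fst ?w)\<close> by (simp add: insert_ident)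
  qed
  moreover have "length ?w = n" "\<forall>x\<in>set ?w. snd x < r"
    using v(1,4) by (simp_all add: v_eq length_insert_at set_insert_at)
  ultimately have "?w \<in> colored_perms r n"
    unfolding colored_perms_def by blast
  moreover have "snd x < r"
    using v(4) x(1) by blast
  moreover have "length ys \<le> n"
    using v(1) by (simp add: v_eq length_insert_at)
  ultimately show ?thesis
    using that[of ?w "snd x" "length ys"] v_eq x(2) by (metis prod.collapse)
qed

lemma bij_betw_insert_at_colored_perms:
  "bij_betw (\<lambda>(w, z, j). insert_at j (Suc n, z) w) (colored_perms r n \<times> {..<r} \<times> {..n})
     (colored_perms r (Suc n))"
proof -
  have "inj_on (\<lambda>(w, z, j). insert_at j (Suc n, z) w) (colored_perms r n \<times> {..<r} \<times> {..n})"
  proof (rule inj_onI)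
    fix p p'
    assume "p \<in> colored_perms r n \<times> {..<r} \<times> {..n}" "p' \<in> colored_perms r n \<times> {..<r} \<times> {..n}"
      and eq: "(\<lambda>(w, z, j). insert_at j (Suc n, z) w) p = (\<lambda>(w, z, j). insert_at j (Suc n, z) w) p'"
    moreover obtain w z j w' z' j' where "p = (w, z, j)" "p' = (w', z', j')"
      by (metis prod_cases3)
    moreover have "\<forall>y\<in>set v. fst y \<noteq> Suc n" if "v \<in> colored_perms r n" for v
      using that by (force simp: colored_perms_def)
    ultimately show "p = p'"
      using insert_at_inject[of "\<lambda>y. fst y \<noteq> Suc n" "(Suc n, z)" "(Suc n, z')" w w' j j']
      by (auto simp: colored_perms_def)
  qed
  moreover have "(\<lambda>(w, z, j). insert_at j (Suc n, z) w) ` (colored_perms r n \<times> {..<r} \<times> {..n}) =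
      colored_perms r (Suc n)"
    by (auto intro: insert_at_in_colored_perms elim!: colored_perms_Suc_remove
        intro!: image_eqI[where x = "(w, z, j)" for w z j])
  ultimately show ?thesis
    by (simp add: bij_betw_def)
qed

lemma sum_colored_perms_Suc:
  "(\<Sum>v\<in>colored_perms r (Suc n). f v) =
     (\<Sum>w\<in>colored_perms r n. \<Sum>z<r. \<Sum>j\<le>n. f (insert_at j (Suc n, z) w))"
  by (simp add: sum.reindex_bij_betw[OF bij_betw_insert_at_colored_perms, symmetric]
      sum.cartesian_product case_prod_beta)

lemma col_Des_eq_descents: "col_Des r w = descents (letter_less r) ((0, 0) # w)"
  by (auto simp: col_Des_def descents_def)

lemma col_Des_subset: "col_Des r w \<subseteq> {..<length w}"
  by (auto simp: col_Des_def)

lemma letter_less_asym: "letter_less r x y \<Longrightarrow> \<not> letter_less r y x"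
  by (simp add: letter_less_def)

lemma letter_less_top:
  assumes "fst y \<le> n"
  shows "letter_less r y (Suc n, 0)"
proof -
  have "0 \<le> int r * int (fst y)"
    by simp
  then have "- (int r * int (fst y)) - int (snd y) < 1 + int n"
    by linarith
  then show ?thesis
    using assms by (simp add: letter_less_def letter_key_def)
qed

lemma letter_less_bottom:
  assumes "fst y \<le> n" "snd y \<le> r" "0 < z"
  shows "letter_less r (Suc n, z) y"
proof -
  have new: "letter_key r (Suc n, z) = - (int r * int (Suc n) + int z)"
    using assms(3) by (simp add: letter_key_def)
  have "- (int r * int (Suc n) + int z) < letter_key r y"
  proof (cases "snd y = 0")
    case True
    have "letter_key r y = int (fst y)"
      using True by (simp add: letter_key_def)
    moreover have "0 \<le> int r * int (Suc n)"
      by simp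
    ultimately show ?thesis
      using assms(3) by linarith
  next
    case False
    have "r * fst y + snd y < r * Suc n + z"
      unfolding mult_Suc_right using assms mult_le_mono2[OF assms(1), of r] by linarith
    then have "int r * int (fst y) + int (snd y) < int r * int (Suc n) + int z"
      by (metis of_nat_add of_nat_mult of_nat_less_iff)
    then show ?thesis
      using False unfolding letter_key_def by simp
  qed
  then show ?thesis
    unfolding letter_less_def new .
qed

lemma letter_less_new_letter:
  assumes "fst y \<le> n" "snd y \<le> r"
  shows "letter_less r (Suc n, z) y \<longleftrightarrow> z \<noteq> 0" and "letter_less r y (Suc n, z) \<longleftrightarrow> z = 0"
  using letter_less_top[OF assms(1)] letter_less_bottom[OF assms] letter_less_asym
  by (cases "z = 0"; auto)+

lemma col_Des_insert_at:
  assumes w: "w \<in> colored_perms r n" and "j \<le> n"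
  shows "col_Des r (insert_at j (Suc n, z) w) =
    {i \<in> col_Des r w. i < j} \<union> (if z = 0 then {Suc j} - {Suc n} else {j})
    \<union> Suc ` {i \<in> col_Des r w. j < i}"
proof (rule set_eqI)
  fix i
  let ?W = "(0, 0) # w"
  have len: "length ?W = Suc n"
    using w by (simp add: colored_perms_def)
  have letters: "fst (?W ! k) \<le> n" "snd (?W ! k) \<le> r" if "k < Suc n" for k
    using w nth_mem[of k ?W] that len by (auto simp: colored_perms_def less_imp_le)
  have "i \<in> col_Des r (insert_at j (Suc n, z) w) \<longleftrightarrow>
      (i < j \<and> i \<in> col_Des r w) \<or> (i = j \<and> letter_less r (Suc n, z) (?W ! j))
      \<or> (i = Suc j \<and> Suc j < Suc n \<and> letter_less r (?W ! Suc j) (Suc n, z))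
      \<or> (Suc j < i \<and> i - 1 \<in> col_Des r w)"
    unfolding col_Des_eq_descents Cons_insert_at
    using mem_descents_insert_at[of j ?W] assms(2) len by simp
  also have "\<dots> \<longleftrightarrow> (i < j \<and> i \<in> col_Des r w) \<or> (i = j \<and> z \<noteq> 0)
      \<or> (i = Suc j \<and> Suc j < Suc n \<and> z = 0) \<or> (Suc j < i \<and> i - 1 \<in> col_Des r w)"
    using letter_less_new_letter(1)[OF letters(1)[of j] letters(2)[of j]]
      letter_less_new_letter(2)[OF letters(1)[of "Suc j"] letters(2)[of "Suc j"]] assms(2) less_Suc_eq_le
    by blast
  also have "\<dots> \<longleftrightarrow> i \<in> {i \<in> col_Des r w. i < j}
      \<union> (if z = 0 then {Suc j} - {Suc n} else {j}) \<union> Suc ` {i \<in> col_Des r w. j < i}"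
  proof -
    have "i \<in> Suc ` {i \<in> col_Des r w. j < i} \<longleftrightarrow> Suc j < i \<and> i - 1 \<in> col_Des r w"
      by (cases i) auto
    then show ?thesis
      using assms(2) by (cases "z = 0") auto
  qed
  finally show "i \<in> col_Des r (insert_at j (Suc n, z) w) \<longleftrightarrow> i \<in> {i \<in> col_Des r w. i < j}
      \<union> (if z = 0 then {Suc j} - {Suc n} else {j}) \<union> Suc ` {i \<in> col_Des r w. j < i}" .
qed

section \<open>Weights of descent sets\<close>

lemma power_card_mult_power_sum: "t ^ card A * Q ^ (\<Sum>A) = (\<Prod>i\<in>A. t * Q ^ i)"
  by (simp add: prod.distrib power_sum)

lemma prod_Suc_image: "(\<Prod>i\<in>Suc ` A. t * Q ^ i) = Q ^ card A * (\<Prod>i\<in>A. t * Q ^ i)"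
proof -
  have "(\<Prod>i\<in>Suc ` A. t * Q ^ i) = (\<Prod>i\<in>A. Q * (t * Q ^ i))"
    by (simp add: prod.reindex mult_ac)
  then show ?thesis
    by (simp add: prod.distrib)
qed

lemma prod_split_at:
  fixes D :: "nat set"
  assumes "finite D"
  shows "prod f D = prod f {i \<in> D. i < j} * (if j \<in> D then f j else 1) * prod f {i \<in> D. j < i}"
proof -
  have "D = {i \<in> D. i < j} \<union> (D \<inter> {j}) \<union> {i \<in> D. j < i}"
    by auto
  also have "prod f \<dots> = prod f {i \<in> D. i < j} * prod f (D \<inter> {j}) * prod f {i \<in> D. j < i}"
    using assms by (subst prod.union_disjoint; auto)+
  finally show ?thesis
    by (simp add: Int_insert_right)
qed

lemma prod_insert_descent:
  fixes D :: "nat set" and t Q :: "'a::comm_monoid_mult"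
  assumes "finite D" "e \<le> 1"
  shows "(\<Prod>i \<in> {i \<in> D. i < j} \<union> {j + e} \<union> Suc ` {i \<in> D. j < i}. t * Q ^ i) =
    Q ^ e * Q ^ card {i \<in> D. j < i} * (if j \<in> D then 1 else t * Q ^ j) * (\<Prod>i\<in>D. t * Q ^ i)"
proof -
  have "j + e \<notin> {i \<in> D. i < j} \<union> Suc ` {i \<in> D. j < i}"
    using assms(2) by auto
  moreover have "{i \<in> D. i < j} \<inter> Suc ` {i \<in> D. j < i} = {}"
    by auto
  ultimately have "(\<Prod>i \<in> {i \<in> D. i < j} \<union> {j + e} \<union> Suc ` {i \<in> D. j < i}. t * Q ^ i) =
      t * Q ^ (j + e) * (\<Prod>i\<in>{i \<in> D. i < j}. t * Q ^ i) * (\<Prod>i\<in>Suc ` {i \<in> D. j < i}. t * Q ^ i)"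
    using assms(1) by (simp add: prod.union_disjoint mult.assoc)
  then show ?thesis
    unfolding prod_split_at[OF assms(1), of "\<lambda>i. t * Q ^ i" j] prod_Suc_image
    by (simp add: power_add mult_ac)
qed

lemma sum_power_card_greater:
  fixes A :: "'b::linorder set"
  assumes "finite A"
  shows "(\<Sum>j\<in>A. Q ^ card {i \<in> A. j < i}) = qint Q (card A)"
  using assms
proof (induction A rule: finite_linorder_min_induct)
  case (insert m A)
  have "{i \<in> insert m A. j < i} = {i \<in> A. j < i}" if "j \<in> A" for j
    using insert.hyps(2) that by auto
  moreover have "{i \<in> insert m A. m < i} = A"
    using insert.hyps(2) by auto
  moreover have m: "m \<notin> A"
    using insert.hyps(2) by blast
  ultimately have "(\<Sum>j\<in>insert m A. Q ^ card {i \<in> insert m A. j < i}) =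
      Q ^ card A + (\<Sum>j\<in>A. Q ^ card {i \<in> A. j < i})"
    using insert.hyps(1) by (simp del: insert_iff)
  then show ?case
    using insert m by (simp add: qint_Suc)
qed simp

lemma sum_power_card_less:
  fixes A :: "'b::linorder set"
  assumes "finite A"
  shows "(\<Sum>j\<in>A. Q ^ card {i \<in> A. i < j}) = qint Q (card A)"
  using assms
proof (induction A rule: finite_linorder_max_induct)
  case (insert m A)
  have "{i \<in> insert m A. i < j} = {i \<in> A. i < j}" if "j \<in> A" for j
    using insert.hyps(2) that by auto
  moreover have "{i \<in> insert m A. i < m} = A"
    using insert.hyps(2) by auto
  moreover have m: "m \<notin> A"
    using insert.hyps(2) by blast
  ultimately have "(\<Sum>j\<in>insert m A. Q ^ card {i \<in> insert m A. i < j}) =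
      Q ^ card A + (\<Sum>j\<in>A. Q ^ card {i \<in> A. i < j})"
    using insert.hyps(1) by (simp del: insert_iff)
  then show ?case
    using insert m by (simp add: qint_Suc)
qed simp

lemma sum_slot_weights:
  assumes D: "D \<subseteq> {..<n}"
  shows "(\<Sum>j<n. Q ^ card {i \<in> D. j < i} * (if j \<in> D then 1 else t * Q ^ j)) =
    qint Q (card D) + t * (qint Q n - qint Q (card D))"
proof -
  define C where "C = {..<n} - D"
  have fin: "finite D" "finite C"
    using D finite_subset by (auto simp: C_def)
  have card_C: "card D + card C = n"
    using card_mono[OF _ D] card_Diff_subset[OF fin(1) D] by (simp add: C_def)
  have shift: "j + card {i \<in> D. j < i} = card D + card {i \<in> C. i < j}" if "j \<in> C" for j
  proof -
    have "D = {i \<in> D. i < j} \<union> {i \<in> D. j < i}"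
      using that by (auto simp: C_def) (metis linorder_neqE_nat)
    then have "card D = card {i \<in> D. i < j} + card {i \<in> D. j < i}"
      using fin(1) by (metis (no_types, lifting) card_Un_disjoint disjoint_iff finite_Un mem_Collect_eq
          order_less_asym)
    moreover have "{..<j} = {i \<in> D. i < j} \<union> {i \<in> C. i < j}"
      using that by (auto simp: C_def)
    then have "card {..<j} = card {i \<in> D. i < j} + card {i \<in> C. i < j}"
      using fin by (simp add: card_Un_disjoint C_def disjoint_iff)
    ultimately show ?thesis
      unfolding card_lessThan by linarith
  qed
  have "(\<Sum>j<n. Q ^ card {i \<in> D. j < i} * (if j \<in> D then 1 else t * Q ^ j)) =
      (\<Sum>j\<in>C. Q ^ card {i \<in> D. j < i} * (if j \<in> D then 1 else t * Q ^ j))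
      + (\<Sum>j\<in>D. Q ^ card {i \<in> D. j < i} * (if j \<in> D then 1 else t * Q ^ j))"
    unfolding C_def by (rule sum.subset_diff[OF D]) simp
  also have "\<dots> = t * (\<Sum>j\<in>C. Q ^ (j + card {i \<in> D. j < i})) + (\<Sum>j\<in>D. Q ^ card {i \<in> D. j < i})"
    by (auto simp: C_def sum_distrib_left power_add mult_ac intro!: sum.cong)
  also have "(\<Sum>j\<in>C. Q ^ (j + card {i \<in> D. j < i})) = Q ^ card D * (\<Sum>j\<in>C. Q ^ card {i \<in> C. i < j})"
    by (simp add: shift power_add sum_distrib_left)
  also have "\<dots> = Q ^ card D * qint Q (card C)"
    by (simp only: sum_power_card_less[OF fin(2)])
  also have "\<dots> = qint Q n - qint Q (card D)"
    using qint_add[of Q "card D" "card C"] card_C by simp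
  finally show ?thesis
    using sum_power_card_greater[OF fin(1)] by (simp add: add.commute)
qed

section \<open>The recursion for the colored Eulerian polynomials\<close>

definition col_weight :: "'b::comm_ring_1 \<Rightarrow> 'b \<Rightarrow> nat \<Rightarrow> (nat \<times> nat) list \<Rightarrow> 'b" where
  "col_weight t q r w = t ^ col_des r w * q ^ col_fmaj r w"

lemma col_weight_eq_prod:
  "col_weight t q r w = (\<Prod>i\<in>col_Des r w. t * (q ^ r) ^ i) * q ^ (\<Sum>x\<leftarrow>w. snd x)"
  unfolding col_weight_def col_des_def col_fmaj_def power_add power_mult
  by (simp only: mult.assoc[symmetric] power_card_mult_power_sum)

lemma col_weight_insert_at:
  assumes w: "w \<in> colored_perms r n" and "j \<le> n" and e: "e = (if z = 0 then 1 else 0)"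
    and "z = 0 \<Longrightarrow> j < n"
  shows "col_weight t q r (insert_at j (Suc n, z) w) =
    q ^ z * (q ^ r) ^ e * (q ^ r) ^ card {i \<in> col_Des r w. j < i}
      * (if j \<in> col_Des r w then 1 else t * (q ^ r) ^ j) * col_weight t q r w"
proof -
  have "(if z = 0 then {Suc j} - {Suc n} else {j}) = {j + e}"
    using assms(2-4) by auto
  then have des: "col_Des r (insert_at j (Suc n, z) w) =
      {i \<in> col_Des r w. i < j} \<union> {j + e} \<union> Suc ` {i \<in> col_Des r w. j < i}"
    using col_Des_insert_at[OF w assms(2)] by simp
  have colors: "(\<Sum>x\<leftarrow>insert_at j (Suc n, z) w. snd x) = z + (\<Sum>x\<leftarrow>w. snd x)"
    by (simp add: map_insert_at sum_list_insert_at)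
  have "finite (col_Des r w)"
    using col_Des_subset finite_subset by blast
  moreover have "e \<le> 1"
    using e by simp
  ultimately have "col_weight t q r (insert_at j (Suc n, z) w) =
      (q ^ r) ^ e * (q ^ r) ^ card {i \<in> col_Des r w. j < i} * (if j \<in> col_Des r w then 1 else t * (q ^ r) ^ j)
        * (\<Prod>i\<in>col_Des r w. t * (q ^ r) ^ i) * q ^ (z + (\<Sum>x\<leftarrow>w. snd x))"
    by (simp only: col_weight_eq_prod des colors prod_insert_descent)
  then show ?thesis
    by (simp add: col_weight_eq_prod power_add mult_ac)
qed

lemma col_weight_append_uncolored:
  assumes "w \<in> colored_perms r n"
  shows "col_weight t q r (insert_at n (Suc n, 0) w) = col_weight t q r w"
proof -
  have "col_Des r w \<subseteq> {..<n}"
    using assms col_Des_subset by (fastforce simp: colored_perms_def)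
  then have "col_Des r (insert_at n (Suc n, 0) w) = col_Des r w"
    using col_Des_insert_at[OF assms, of n 0] by auto
  then show ?thesis
    by (simp add: col_weight_eq_prod map_insert_at sum_list_insert_at)
qed

lemma sum_col_weight_insert_colored:
  assumes w: "w \<in> colored_perms r n" and "0 < z"
  shows "(\<Sum>j\<le>n. col_weight t q r (insert_at j (Suc n, z) w)) =
    q ^ z * (qint (q ^ r) (col_des r w) + t * (qint (q ^ r) (Suc n) - qint (q ^ r) (col_des r w)))
      * col_weight t q r w"
proof -
  let ?D = "col_Des r w"
  have D: "?D \<subseteq> {..<Suc n}"
    using w col_Des_subset[of r w] by (auto simp: colored_perms_def)
  have "(\<Sum>j\<le>n. col_weight t q r (insert_at j (Suc n, z) w)) =
      (\<Sum>j<Suc n. q ^ z * ((q ^ r) ^ card {i \<in> ?D. j < i} * (if j \<in> ?D then 1 else t * (q ^ r) ^ j))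
        * col_weight t q r w)"
    unfolding lessThan_Suc_atMost
  proof (rule sum.cong)
    fix j
    assume "j \<in> {..n}"
    then show "col_weight t q r (insert_at j (Suc n, z) w) = q ^ z * ((q ^ r) ^ card {i \<in> ?D. j < i}
        * (if j \<in> ?D then 1 else t * (q ^ r) ^ j)) * col_weight t q r w"
      using col_weight_insert_at[OF w _ refl, where z = z and t = t and q = q] assms(2)
      by (simp add: mult.assoc split del: if_split)
  qed simp
  also have "\<dots> = q ^ z * (\<Sum>j<Suc n. (q ^ r) ^ card {i \<in> ?D. j < i} * (if j \<in> ?D then 1 else t * (q ^ r) ^ j))
      * col_weight t q r w"
    by (simp only: sum_distrib_left sum_distrib_right)
  also have "\<dots> = q ^ z * (qint (q ^ r) (col_des r w)
      + t * (qint (q ^ r) (Suc n) - qint (q ^ r) (col_des r w))) * col_weight t q r w"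
    by (simp only: sum_slot_weights[OF D] col_des_def)
  finally show ?thesis .
qed

lemma sum_col_weight_insert_uncolored:
  assumes w: "w \<in> colored_perms r n"
  shows "(\<Sum>j\<le>n. col_weight t q r (insert_at j (Suc n, 0) w)) =
    (1 + q ^ r * (qint (q ^ r) (col_des r w) + t * (qint (q ^ r) n - qint (q ^ r) (col_des r w))))
      * col_weight t q r w"
proof -
  let ?D = "col_Des r w"
  have D: "?D \<subseteq> {..<n}"
    using w col_Des_subset[of r w] by (auto simp: colored_perms_def)
  have "(\<Sum>j\<le>n. col_weight t q r (insert_at j (Suc n, 0) w)) =
      (\<Sum>j<n. col_weight t q r (insert_at j (Suc n, 0) w)) + col_weight t q r w"
    by (simp add: col_weight_append_uncolored[OF w] flip: lessThan_Suc_atMost)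
  also have "(\<Sum>j<n. col_weight t q r (insert_at j (Suc n, 0) w)) =
      (\<Sum>j<n. q ^ r * ((q ^ r) ^ card {i \<in> ?D. j < i} * (if j \<in> ?D then 1 else t * (q ^ r) ^ j))
        * col_weight t q r w)"
  proof (rule sum.cong)
    fix j
    assume "j \<in> {..<n}"
    then show "col_weight t q r (insert_at j (Suc n, 0) w) = q ^ r * ((q ^ r) ^ card {i \<in> ?D. j < i}
        * (if j \<in> ?D then 1 else t * (q ^ r) ^ j)) * col_weight t q r w"
      using col_weight_insert_at[OF w _ refl, where z = 0 and t = t and q = q]
      by (simp add: mult.assoc split del: if_split)
  qed simp
  also have "\<dots> = q ^ r * (\<Sum>j<n. (q ^ r) ^ card {i \<in> ?D. j < i} * (if j \<in> ?D then 1 else t * (q ^ r) ^ j))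
      * col_weight t q r w"
    by (simp only: sum_distrib_left sum_distrib_right)
  also have "\<dots> = q ^ r * (qint (q ^ r) (col_des r w)
      + t * (qint (q ^ r) n - qint (q ^ r) (col_des r w))) * col_weight t q r w"
    by (simp only: sum_slot_weights[OF D] col_des_def)
  finally show ?thesis
    by (simp add: algebra_simps)
qed

lemma sum_col_weight_insert_at:
  fixes t q :: "'b::comm_ring_1"
  assumes w: "w \<in> colored_perms r n" and "0 < r"
  shows "(\<Sum>z<r. \<Sum>j\<le>n. col_weight t q r (insert_at j (Suc n, z) w)) =
    col_weight t q r w * (t * qint q r * qint (q ^ r) (Suc n)
      + (1 - t) * (1 + q * qint q r * qint (q ^ r) (col_des r w)))"
proof -
  obtain r' where r': "r = Suc r'"
    using assms(2) by (cases r) auto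
  define a d N N' where "a = qint q r'" and "d = qint (q ^ r) (col_des r w)"
    and "N = qint (q ^ r) n" and "N' = qint (q ^ r) (Suc n)"
  have z_range: "{..<r} = {..<Suc r'}"
    by (simp add: r')
  have "(\<Sum>z<r. \<Sum>j\<le>n. col_weight t q r (insert_at j (Suc n, z) w)) =
      (1 + q ^ r * (d + t * (N - d))) * col_weight t q r w
      + (\<Sum>z<r'. q ^ Suc z * (d + t * (N' - d)) * col_weight t q r w)"
    unfolding z_range sum.lessThan_Suc_shift
    by (simp add: sum_col_weight_insert_colored[OF w] sum_col_weight_insert_uncolored[OF w] d_def N_def N'_def)
  also have "(\<Sum>z<r'. q ^ Suc z * (d + t * (N' - d)) * col_weight t q r w) =
      q * a * (d + t * (N' - d)) * col_weight t q r w"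
    by (simp add: a_def qint_def sum_distrib_left sum_distrib_right mult.assoc)
  also have "(1 + q ^ r * (d + t * (N - d))) * col_weight t q r w + \<dots> =
      col_weight t q r w * (t * qint q r * N' + (1 - t) * (1 + q * qint q r * d))"
  proof -
    have R: "qint q r = 1 + q * a"
      by (simp add: r' a_def qint_Suc2)
    have "q ^ r' = 1 - (1 - q) * a"
      by (simp add: a_def one_minus_mult_qint)
    then have Q: "q ^ r = q * (1 - (1 - q) * a)"
      by (simp only: r' power_Suc)
    have N': "N' = 1 + q ^ r * N"
      by (simp add: N'_def N_def qint_Suc2)
    show ?thesis
      unfolding R N' unfolding Q by (simp add: algebra_simps)
  qed
  finally show ?thesis
    by (simp add: N'_def d_def)
qed

lemma colored_eulerian_eq_sum_col_weight:
  "colored_eulerian r n q = (\<Sum>w\<in>colored_perms r n. col_weight fps_X (fps_const q) r w)"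
  by (simp add: colored_eulerian_def col_weight_def)

lemma colored_eulerian_0: "colored_eulerian r 0 q = 1"
  by (simp add: colored_eulerian_def colored_perms_0 col_des_def col_fmaj_def col_Des_def)

lemma fps_qXD_col_weight:
  "fps_qXD Q (col_weight fps_X (fps_const q) r w) =
     fps_const (qint Q (col_des r w)) * col_weight fps_X (fps_const q) r w"
  by (simp add: col_weight_def fps_qXD_monom mult_ac)

lemma colored_eulerian_Suc:
  assumes "0 < r"
  shows "colored_eulerian r (Suc n) q =
    fps_X * fps_const (qint q r * qint (q ^ r) (Suc n)) * colored_eulerian r n q
    + (1 - fps_X) * (colored_eulerian r n q + fps_const (q * qint q r) * fps_qXD (q ^ r) (colored_eulerian r n q))"
proof -
  let ?A = "colored_eulerian r n q" and ?cw = "col_weight fps_X (fps_const q) r"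
  have "colored_eulerian r (Suc n) q = (\<Sum>w\<in>colored_perms r n.
      fps_X * fps_const (qint q r * qint (q ^ r) (Suc n)) * ?cw w
      + (1 - fps_X) * (?cw w + fps_const (q * qint q r) * (fps_const (qint (q ^ r) (col_des r w)) * ?cw w)))"
    unfolding colored_eulerian_eq_sum_col_weight sum_colored_perms_Suc
    by (intro sum.cong refl)
      (simp add: sum_col_weight_insert_at[OF _ assms] qint_fps_const algebra_simps
        flip: fps_const_mult)
  also have "\<dots> = fps_X * fps_const (qint q r * qint (q ^ r) (Suc n)) * ?A
      + (1 - fps_X) * (?A + fps_const (q * qint q r)
        * (\<Sum>w\<in>colored_perms r n. fps_const (qint (q ^ r) (col_des r w)) * ?cw w))"
    unfolding colored_eulerian_eq_sum_col_weight by (simp only: sum.distrib sum_distrib_left distrib_left)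
  also have "(\<Sum>w\<in>colored_perms r n. fps_const (qint (q ^ r) (col_des r w)) * ?cw w) = fps_qXD (q ^ r) ?A"
    by (simp add: colored_eulerian_eq_sum_col_weight fps_qXD_sum fps_qXD_col_weight)
  finally show ?thesis .
qed

theorem proposition4p1:
  fixes r n :: nat and q :: "'a::field"
  assumes "r > 0" and "q \<noteq> 0"
  shows "colored_eulerian r n q / (\<Prod>i=0..n. 1 - fps_const (q ^ (r * i)) * fps_X) =
    (\<Sum>k=0..n. fps_const (q powi (int r * int (Suc k choose 2) + (1 - int r) * int k)
                   * qint q r ^ k * qfact (q ^ r) k * qStirling r q n k) * fps_X ^ k
              / (\<Prod>i=0..k. 1 - fps_const (q ^ (r * i)) * fps_X))"
proof -
  have denominator: "(\<Prod>i=0..k. 1 - fps_const (q ^ (r * i)) * fps_X) = fps_qpoch (q ^ r) (Suc k)" for k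
    by (simp add: power_mult prod_atLeast0AtMost_eq_fps_qpoch)
  have qpoch_nonzero: "fps_qpoch (q ^ r) k \<noteq> 0" for k
    using fps_qpoch_nth_0 by (metis fps_zero_nth zero_neq_one)
  \<comment> \<open>The exponent of \<open>q\<close> is \<open>r (k choose 2) + k \<ge> 0\<close>.\<close>
  have exponent: "int r * int (Suc k choose 2) + (1 - int r) * int k = int (r * (k choose 2) + k)" for k
    by (simp add: numeral_2_eq_2 algebra_simps)
  have "colored_eulerian r n q = fps_qpoch (q ^ r) (Suc n) * carlitz_series q r n"
    by (rule eq_fps_qpoch_mult_carlitz_series) (simp_all add: colored_eulerian_0 colored_eulerian_Suc assms(1))
  then have "colored_eulerian r n q / (\<Prod>i=0..n. 1 - fps_const (q ^ (r * i)) * fps_X) = carlitz_series q r n"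
    by (simp add: denominator qpoch_nonzero)
  also have "\<dots> = (\<Sum>k\<le>n. fps_const (q ^ (r * (k choose 2) + k) * qint q r ^ k * qStirling r q n k)
        * (fps_const (qfact (q ^ r) k) * fps_X ^ k) / fps_qpoch (q ^ r) (Suc k))"
    unfolding carlitz_series_qStirling Abs_fps_qfalling_mult_fps_qpoch[symmetric]
    by (simp add: mult.assoc qpoch_nonzero)
  also have "\<dots> = (\<Sum>k=0..n. fps_const (q powi (int r * int (Suc k choose 2) + (1 - int r) * int k)
                   * qint q r ^ k * qfact (q ^ r) k * qStirling r q n k) * fps_X ^ k
              / (\<Prod>i=0..k. 1 - fps_const (q ^ (r * i)) * fps_X))"
    unfolding denominator exponent power_int_of_nat unfolding atLeast0AtMost by (simp add: mult_ac)
  finally show ?thesis .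
qed

end
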